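(* Let $\{(x_i,y_i)\}_{i=1}^n\subset\mathbb{R}^d\times\{\pm1\}$ be linearly separable (there is $w^*$ with $\mathrm{sign}(\langle w^*,x_i\rangle)=y_i$ for all $i$), and let $L(w)=\frac1n\sum_{i=1}^n\ell(y_i\langle w,x_i\rangle)$ with $\ell$ differentiable, decreasing, convex, not attaining its minimum, and $\inf\ell=0$. Let $\psi$ be a differentiable strictly convex potential on $\mathbb{R}^d$ for which mirror descent $\nabla\psi(w_{t+1})=\nabla\psi(w_t)-\eta\nabla L(w_t)$ is well defined. If $\eta$ is small enough that $\psi-\eta L$ is convex, then $L(w_t)\to0$ as $t\to\infty$, and hence $\lim_{t\to\infty}\|w_t\|=\infty$ for any norm $\|\cdot\|$ on $\mathbb{R}^d$. *)

theory Defs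
  imports "HOL-Analysis.Analysis"
begin

definition strict_convex_on :: "'a::real_vector set \<Rightarrow> ('a \<Rightarrow> real) \<Rightarrow> bool" where
  "strict_convex_on S f \<longleftrightarrow>
     (\<forall>x\<in>S. \<forall>y\<in>S. x \<noteq> y \<longrightarrow> (\<forall>u::real. 0 < u \<and> u < 1 \<longrightarrow>
        f ((1 - u) *\<^sub>R x + u *\<^sub>R y) < (1 - u) * f x + u * f y))"

definition emp_loss :: "nat \<Rightarrow> (nat \<Rightarrow> 'a::real_inner) \<Rightarrow> (nat \<Rightarrow> real) \<Rightarrow> (real \<Rightarrow> real) \<Rightarrow> 'a \<Rightarrow> real" where
  "emp_loss n x y l w = (1 / real n) * (\<Sum>i<n. l (y i * (w \<bullet> x i)))"

definition is_norm :: "('a::real_vector \<Rightarrow> real) \<Rightarrow> bool" where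
  "is_norm N \<longleftrightarrow> (\<forall>v. 0 \<le> N v) \<and> (\<forall>v. N v = 0 \<longleftrightarrow> v = 0)
     \<and> (\<forall>c v. N (c *\<^sub>R v) = \<bar>c\<bar> * N v) \<and> (\<forall>u v. N (u + v) \<le> N u + N v)"

end

theory Submission
  imports Defs
begin

(* Let D be the Bregman divergence of psi. Convexity of psi - eta L makes every mirror step a
   descent step for L, and convexity of L gives the three-point inequality
   eta (L w_{t+1} - L u) <= D u w_t - D u w_{t+1}. Telescoping yields
   L w_T <= L u + D u w_0 / (eta T) for every u, so L w_t tends to inf L. Scaling a separator
   shows inf L = inf l = 0. As l is positive everywhere, small loss forces large |w_t|, and on
   R^d every norm dominates a multiple of the Euclidean one. *)

lemma strict_convex_on_imp_convex_on:
  assumes "convex S" "strict_convex_on S f"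
  shows "convex_on S f"
proof (rule convex_onI)
  fix t :: real and a b assume "a \<in> S" "b \<in> S" "0 < t" "t < 1"
  with assms show "f ((1 - t) *\<^sub>R a + t *\<^sub>R b) \<le> (1 - t) * f a + t * f b"
    unfolding strict_convex_on_def
    by (cases "a = b") (auto simp: algebra_simps intro: less_imp_le)
qed (fact assms)

lemma convex_on_compose_affine:
  fixes f :: "'b::real_vector \<Rightarrow> real" and g :: "'a::real_vector \<Rightarrow> 'b"
  assumes f: "convex_on UNIV f" and g: "linear g"
  shows "convex_on UNIV (\<lambda>x. f (a + g x))"
proof (rule convex_onI)
  fix t :: real and u v :: 'a assume t: "0 < t" "t < 1"
  have "a + g ((1 - t) *\<^sub>R u + t *\<^sub>R v) = (1 - t) *\<^sub>R (a + g u) + t *\<^sub>R (a + g v)"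
    by (simp only: linear_add[OF g] linear_scale[OF g]) (simp add: algebra_simps)
  then show "f (a + g ((1 - t) *\<^sub>R u + t *\<^sub>R v)) \<le> (1 - t) * f (a + g u) + t * f (a + g v)"
    using convex_onD[OF f, of t] t by simp
qed simp

lemma convex_on_sum_fun:
  assumes "finite I" "convex S" "\<And>i. i \<in> I \<Longrightarrow> convex_on S (f i)"
  shows "convex_on S (\<lambda>x. \<Sum>i\<in>I. f i x)"
  using assms by (induction I rule: finite_induct) (auto simp: convex_on_const)

lemma convex_on_above_tangent:
  fixes f :: "'a::real_normed_vector \<Rightarrow> real"
  assumes f: "convex_on UNIV f" and f': "(f has_derivative f') (at v)"
  shows "f v + f' (u - v) \<le> f u"
proof -
  define G where "G s = f (v + s *\<^sub>R (u - v))" for s :: real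
  have G_convex: "convex_on UNIV G"
    unfolding G_def by (intro convex_on_compose_affine[OF f] linear_scaleR_left)
  have "((\<lambda>s. v + s *\<^sub>R (u - v)) has_derivative (\<lambda>s. s *\<^sub>R (u - v))) (at 0)"
    by (auto intro!: derivative_eq_intros)
  moreover have "(f has_derivative f') (at (v + 0 *\<^sub>R (u - v)))"
    using f' by simp
  ultimately have "(G has_derivative (\<lambda>s. f' (s *\<^sub>R (u - v)))) (at 0)"
    unfolding G_def by (rule has_derivative_compose)
  then have "(G has_field_derivative f' (u - v)) (at 0)"
    unfolding has_field_derivative_def
    by (rule has_derivative_eq_rhs)
       (simp add: fun_eq_iff linear_scale[OF has_derivative_linear[OF f']])
  with G_convex have "G 1 - G 0 \<ge> f' (u - v) * (1 - 0)"
    by (intro convex_on_imp_above_tangent) auto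
  then show ?thesis
    unfolding G_def by simp
qed

definition bregman :: "('a::real_inner \<Rightarrow> real) \<Rightarrow> ('a \<Rightarrow> 'a) \<Rightarrow> 'a \<Rightarrow> 'a \<Rightarrow> real" where
  "bregman psi grad_psi u v = psi u - psi v - grad_psi v \<bullet> (u - v)"

lemma bregman_nonneg:
  assumes "convex_on UNIV psi" "(psi has_derivative (\<lambda>h. grad_psi v \<bullet> h)) (at v)"
  shows "0 \<le> bregman psi grad_psi u v"
  using convex_on_above_tangent[OF assms, of u] unfolding bregman_def by simp

locale mirror_descent =
  fixes L psi :: "'a::real_inner \<Rightarrow> real"
    and grad_L grad_psi :: "'a \<Rightarrow> 'a"
    and eta :: real
    and w :: "nat \<Rightarrow> 'a"
  assumes L_convex: "convex_on UNIV L"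
    and L_grad: "\<And>v. (L has_derivative (\<lambda>h. grad_L v \<bullet> h)) (at v)"
    and psi_convex: "convex_on UNIV psi"
    and psi_grad: "\<And>v. (psi has_derivative (\<lambda>h. grad_psi v \<bullet> h)) (at v)"
    and eta_pos: "0 < eta"
    and eta_small: "convex_on UNIV (\<lambda>v. psi v - eta * L v)"
    and mirror_step: "\<And>t. grad_psi (w (Suc t)) = grad_psi (w t) - eta *\<^sub>R grad_L (w t)"
begin

abbreviation D :: "'a \<Rightarrow> 'a \<Rightarrow> real" where
  "D \<equiv> bregman psi grad_psi"

lemma D_nonneg: "0 \<le> D u v"
  by (rule bregman_nonneg[OF psi_convex psi_grad])

text \<open>The gradient of \<open>psi - eta L\<close> at \<open>w t\<close> is \<open>grad_psi (w (Suc t))\<close>, so its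
  tangent inequality at \<open>w t\<close> is exactly this descent estimate.\<close>
lemma loss_descent: "eta * L (w (Suc t)) + D (w t) (w (Suc t)) \<le> eta * L (w t)"
proof -
  have "((\<lambda>v. psi v - eta * L v) has_derivative (\<lambda>h. (grad_psi v - eta *\<^sub>R grad_L v) \<bullet> h)) (at v)" for v
    using psi_grad[of v] L_grad[of v]
    by (auto intro!: derivative_eq_intros simp: inner_diff_left)
  from convex_on_above_tangent[OF eta_small this, of "w t" "w (Suc t)"]
  show ?thesis
    unfolding bregman_def mirror_step[symmetric]
    by (simp add: inner_diff_left inner_diff_right algebra_simps)
qed

lemma loss_decreasing: "L (w (Suc t)) \<le> L (w t)"
proof -
  have "eta * L (w (Suc t)) \<le> eta * L (w t)"
    using loss_descent[of t] D_nonneg[of "w t" "w (Suc t)"] by linarith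
  with eta_pos show ?thesis by simp
qed

lemma loss_three_point: "eta * (L (w (Suc t)) - L u) \<le> D u (w t) - D u (w (Suc t))"
proof -
  have "eta * (L (w t) + grad_L (w t) \<bullet> (u - w t)) \<le> eta * L u"
    using convex_on_above_tangent[OF L_convex L_grad, of "w t" u] eta_pos by simp
  then have "eta * L (w t) + (grad_psi (w t) - grad_psi (w (Suc t))) \<bullet> (u - w t) \<le> eta * L u"
    by (simp add: mirror_step distrib_left)
  with loss_descent[of t] show ?thesis
    unfolding bregman_def by (simp add: inner_diff_left inner_diff_right algebra_simps)
qed

lemma loss_gap_telescope: "eta * real T * (L (w T) - L u) \<le> D u (w 0) - D u (w T)"
proof (induction T)
  case 0
  then show ?case by simp
next
  case (Suc T)
  have "eta * real T * (L (w (Suc T)) - L u) \<le> eta * real T * (L (w T) - L u)"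
    using loss_decreasing[of T] eta_pos by (intro mult_left_mono) auto
  with Suc.IH loss_three_point[of T u] show ?case
    by (simp add: algebra_simps)
qed

lemma loss_gap_bound:
  assumes "0 < T"
  shows "L (w T) \<le> L u + D u (w 0) / eta / real T"
proof -
  have "eta * real T * (L (w T) - L u) \<le> D u (w 0)"
    using loss_gap_telescope[of T u] D_nonneg[of u "w T"] by linarith
  with assms eta_pos show ?thesis
    by (simp add: field_simps)
qed

theorem loss_tendsto_INF:
  assumes "bdd_below (range L)"
  shows "(\<lambda>t. L (w t)) \<longlonglongrightarrow> (INF v. L v)"
proof (rule order_tendstoI)
  fix a assume "a < (INF v. L v)"
  then show "\<forall>\<^sub>F t in sequentially. a < L (w t)"
    using cINF_lower[OF assms] by (intro always_eventually) (auto intro: less_le_trans)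
next
  fix a assume "(INF v. L v) < a"
  then obtain u where u: "L u < a"
    using cINF_less_iff[OF UNIV_not_empty assms] by blast
  have "(\<lambda>T. L u + D u (w 0) / eta / real T) \<longlonglongrightarrow> L u"
    using tendsto_add[OF tendsto_const lim_const_over_n, of "L u" "D u (w 0) / eta"] by simp
  from order_tendstoD(2)[OF this u]
  have "\<forall>\<^sub>F T in sequentially. L u + D u (w 0) / eta / real T < a" .
  then show "\<forall>\<^sub>F t in sequentially. L (w t) < a"
    using eventually_gt_at_top[of 0]
  proof eventually_elim
    case (elim T)
    then show ?case
      using loss_gap_bound[of T u] by linarith
  qed
qed

end

lemma convex_on_emp_loss:
  assumes "convex_on UNIV l"
  shows "convex_on UNIV (emp_loss n x y l)"
proof -
  have "convex_on UNIV (\<lambda>v. l (0 + v \<bullet> (y i *\<^sub>R x i)))" for i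
    by (intro convex_on_compose_affine[OF assms] bounded_linear.linear bounded_linear_inner_left)
  then have "convex_on UNIV (\<lambda>v. \<Sum>i<n. l (y i * (v \<bullet> x i)))"
    by (intro convex_on_sum_fun) (simp_all add: algebra_simps)
  then show ?thesis
    unfolding emp_loss_def[abs_def] by (intro convex_on_cmul) simp_all
qed

lemma emp_loss_le:
  assumes "n \<ge> 1" "\<And>i. i < n \<Longrightarrow> l (y i * (v \<bullet> x i)) \<le> K"
  shows "emp_loss n x y l v \<le> K"
  using sum_bounded_above[of "{..<n}" "\<lambda>i. l (y i * (v \<bullet> x i))" K] assms
  unfolding emp_loss_def by (simp add: field_simps)

lemma emp_loss_ge:
  assumes "n \<ge> 1" "\<And>i. i < n \<Longrightarrow> K \<le> l (y i * (v \<bullet> x i))"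
  shows "K \<le> emp_loss n x y l v"
  using sum_bounded_below[of "{..<n}" K "\<lambda>i. l (y i * (v \<bullet> x i))"] assms
  unfolding emp_loss_def by (simp add: field_simps)

lemma emp_loss_ge_term:
  assumes "i < n" "\<And>z. 0 \<le> l z"
  shows "l (y i * (v \<bullet> x i)) \<le> real n * emp_loss n x y l v"
  using member_le_sum[of i "{..<n}" "\<lambda>i. l (y i * (v \<bullet> x i))"] assms
  unfolding emp_loss_def by simp

lemma emp_loss_scaled_separator_le:
  assumes "n \<ge> 1" "antimono l" and margin: "\<And>i. i < n \<Longrightarrow> 0 < y i * (ws \<bullet> x i)"
  shows "\<exists>c. emp_loss n x y l (c *\<^sub>R ws) \<le> l z"
proof -
  define m where "m = Min ((\<lambda>i. y i * (ws \<bullet> x i)) ` {..<n})"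
  have "{..<n} \<noteq> {}"
    using \<open>n \<ge> 1\<close> by (simp add: lessThan_empty_iff)
  then have m_pos: "0 < m" and m_le: "\<And>i. i < n \<Longrightarrow> m \<le> y i * (ws \<bullet> x i)"
    using margin unfolding m_def by auto
  have "emp_loss n x y l ((\<bar>z\<bar> / m) *\<^sub>R ws) \<le> l z"
  proof (rule emp_loss_le[OF \<open>n \<ge> 1\<close>])
    fix i assume "i < n"
    have "z \<le> \<bar>z\<bar> / m * m"
      using m_pos by simp
    also have "\<dots> \<le> \<bar>z\<bar> / m * (y i * (ws \<bullet> x i))"
      using m_le[OF \<open>i < n\<close>] m_pos by (intro mult_left_mono) simp_all
    also have "\<dots> = y i * (((\<bar>z\<bar> / m) *\<^sub>R ws) \<bullet> x i)"
      by simp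
    finally show "l (y i * (((\<bar>z\<bar> / m) *\<^sub>R ws) \<bullet> x i)) \<le> l z"
      using \<open>antimono l\<close> by (simp add: antimono_def)
  qed
  then show ?thesis ..
qed

lemma INF_emp_loss_separable:
  assumes "n \<ge> 1" "antimono l" "bdd_below (range l)"
    and margin: "\<And>i. i < n \<Longrightarrow> 0 < y i * (ws \<bullet> x i)"
  shows "bdd_below (range (emp_loss n x y l))" "(INF v. emp_loss n x y l v) = (INF z. l z)"
proof -
  have lower: "(INF z. l z) \<le> emp_loss n x y l v" for v
    using assms(1) by (rule emp_loss_ge) (rule cINF_lower[OF assms(3)], simp)
  then show bdd: "bdd_below (range (emp_loss n x y l))"
    by (intro bdd_belowI2[where m = "INF z. l z"])
  show "(INF v. emp_loss n x y l v) = (INF z. l z)"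
  proof (rule antisym)
    show "(INF v. emp_loss n x y l v) \<le> (INF z. l z)"
    proof (rule cINF_greatest)
      fix z
      obtain c where "emp_loss n x y l (c *\<^sub>R ws) \<le> l z"
        using emp_loss_scaled_separator_le[where x = x and y = y, OF assms(1,2) margin] by blast
      then show "(INF v. emp_loss n x y l v) \<le> l z"
        by (meson bdd cINF_lower UNIV_I order_trans)
    qed simp
  qed (rule cINF_greatest[OF UNIV_not_empty lower])
qed

lemma emp_loss_norm_lower:
  assumes "i < n" "\<bar>y i\<bar> \<le> 1" "antimono l" "\<And>z. 0 \<le> l z"
  shows "l (norm v * norm (x i)) \<le> real n * emp_loss n x y l v"
proof -
  have "y i * (v \<bullet> x i) \<le> \<bar>v \<bullet> x i\<bar>"
    using assms(2) by (metis abs_ge_self abs_mult mult_left_le_one_le abs_ge_zero order_trans)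
  also have "\<dots> \<le> norm v * norm (x i)"
    by (rule Cauchy_Schwarz_ineq2)
  finally have "l (norm v * norm (x i)) \<le> l (y i * (v \<bullet> x i))"
    using \<open>antimono l\<close> by (simp add: antimono_def)
  also have "\<dots> \<le> real n * emp_loss n x y l v"
    using assms(1,4) by (rule emp_loss_ge_term)
  finally show ?thesis .
qed

lemma emp_loss_tendsto_0_imp_norm_at_top:
  assumes "i < n" "\<bar>y i\<bar> \<le> 1" "antimono l" "\<And>z. 0 < l z"
    and "(\<lambda>t. emp_loss n x y l (w t)) \<longlonglongrightarrow> 0"
  shows "filterlim (\<lambda>t. norm (w t)) at_top sequentially"
  unfolding filterlim_at_top
proof
  fix Z :: real
  define B where "B = max Z 0"
  have "0 < l (B * norm (x i)) / real n"
    using assms(1,4) by simp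
  from order_tendstoD(2)[OF assms(5) this]
  show "\<forall>\<^sub>F t in sequentially. Z \<le> norm (w t)"
  proof eventually_elim
    case (elim t)
    show ?case
    proof (rule ccontr)
      assume "\<not> Z \<le> norm (w t)"
      then have "norm (w t) * norm (x i) \<le> B * norm (x i)"
        unfolding B_def by (intro mult_right_mono) auto
      then have "l (B * norm (x i)) \<le> l (norm (w t) * norm (x i))"
        using \<open>antimono l\<close> by (simp add: antimono_def)
      also have "\<dots> \<le> real n * emp_loss n x y l (w t)"
        using emp_loss_norm_lower[of i n y l, OF assms(1-3)] assms(4) less_imp_le by blast
      finally show False
        using elim assms(1) by (simp add: field_simps)
    qed
  qed
qed

lemma is_norm_sum_le:
  assumes "is_norm N" "finite S"
  shows "N (\<Sum>i\<in>S. f i) \<le> (\<Sum>i\<in>S. N (f i))"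
  using assms(2)
proof (induction S rule: finite_induct)
  case empty
  then show ?case
    using assms(1) unfolding is_norm_def by force
next
  case (insert a S)
  have "N (f a + sum f S) \<le> N (f a) + N (sum f S)"
    using assms(1) unfolding is_norm_def by blast
  with insert show ?case
    by simp
qed

lemma is_norm_le_norm:
  fixes N :: "'a::euclidean_space \<Rightarrow> real"
  assumes N: "is_norm N"
  shows "N v \<le> (\<Sum>b\<in>Basis. N b) * norm v"
proof -
  have "N v = N (\<Sum>b\<in>Basis. (v \<bullet> b) *\<^sub>R b)"
    by (simp add: euclidean_representation)
  also have "\<dots> \<le> (\<Sum>b\<in>Basis. N ((v \<bullet> b) *\<^sub>R b))"
    by (rule is_norm_sum_le[OF N]) simp
  also have "\<dots> = (\<Sum>b\<in>Basis. \<bar>v \<bullet> b\<bar> * N b)"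
    using N unfolding is_norm_def by simp
  also have "\<dots> \<le> (\<Sum>b\<in>Basis. norm v * N b)"
    using N unfolding is_norm_def by (intro sum_mono mult_right_mono Basis_le_norm) auto
  finally show ?thesis
    by (simp add: sum_distrib_left mult.commute)
qed

lemma is_norm_continuous_on:
  fixes N :: "'a::euclidean_space \<Rightarrow> real"
  assumes N: "is_norm N"
  shows "continuous_on UNIV N"
proof (rule lipschitz_on_continuous_on)
  have triangle: "N u \<le> N v + N (u - v)" for u v
    using N unfolding is_norm_def by (metis add.commute diff_add_cancel)
  have symmetric: "N (u - v) = N (v - u)" for u v
    using N unfolding is_norm_def by (metis abs_minus_cancel abs_one minus_diff_eq mult_1 scaleR_minus1_left)
  show "(\<Sum>b\<in>Basis. N b)-lipschitz_on UNIV N"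
  proof (rule lipschitz_onI)
    fix u v :: 'a
    have "\<bar>N u - N v\<bar> \<le> N (u - v)"
      using triangle[of u v] triangle[of v u] symmetric[of u v] by linarith
    then show "dist (N u) (N v) \<le> (\<Sum>b\<in>Basis. N b) * dist u v"
      using is_norm_le_norm[OF N, of "u - v"] by (simp add: dist_real_def dist_norm)
  next
    show "0 \<le> (\<Sum>b\<in>Basis. N b)"
      using N unfolding is_norm_def by (simp add: sum_nonneg)
  qed
qed

text \<open>The constant is the minimum of \<open>N\<close> on the compact Euclidean unit sphere.\<close>
lemma is_norm_ge_norm:
  fixes N :: "'a::euclidean_space \<Rightarrow> real"
  assumes N: "is_norm N"
  obtains m where "0 < m" "\<And>v. m * norm v \<le> N v"
proof -
  obtain b :: 'a where "b \<in> Basis"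
    using nonempty_Basis by blast
  then have "sphere (0::'a) 1 \<noteq> {}"
    by (auto simp: norm_Basis)
  then obtain z where z: "z \<in> sphere 0 1" and z_min: "\<And>v. v \<in> sphere 0 1 \<Longrightarrow> N z \<le> N v"
    using continuous_attains_inf[OF compact_sphere _ continuous_on_subset[OF is_norm_continuous_on[OF N]]]
    by blast
  have "0 < N z"
    using z N unfolding is_norm_def by (metis norm_zero order_le_less mem_sphere_0 zero_neq_one)
  moreover have "N z * norm v \<le> N v" for v
  proof (cases "v = 0")
    case True
    then show ?thesis
      using N unfolding is_norm_def by simp
  next
    case False
    then have "N z \<le> N ((1 / norm v) *\<^sub>R v)"
      by (intro z_min) simp
    also have "\<dots> = N v / norm v"
      using N unfolding is_norm_def by simp
    finally show ?thesis
      using False by (simp add: field_simps)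
  qed
  ultimately show ?thesis
    using that by blast
qed

lemma filterlim_is_norm_at_top:
  fixes N :: "'a::euclidean_space \<Rightarrow> real"
  assumes "is_norm N" "filterlim (\<lambda>t. norm (f t)) at_top F"
  shows "filterlim (\<lambda>t. N (f t)) at_top F"
proof -
  obtain m where m: "0 < m" "\<And>v. m * norm v \<le> N v"
    using is_norm_ge_norm[OF assms(1)] by blast
  have "filterlim (\<lambda>t. m * norm (f t)) at_top F"
    using filterlim_tendsto_pos_mult_at_top[OF tendsto_const m(1) assms(2)] .
  then show ?thesis
    by (rule filterlim_at_top_mono) (simp add: m(2))
qed

theorem lemma3:
  fixes n :: nat
    and x :: "nat \<Rightarrow> 'a::euclidean_space"
    and y :: "nat \<Rightarrow> real"
    and l :: "real \<Rightarrow> real"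
    and psi :: "'a \<Rightarrow> real"
    and grad_psi :: "'a \<Rightarrow> 'a"
    and grad_L :: "'a \<Rightarrow> 'a"
    and eta :: real
    and w :: "nat \<Rightarrow> 'a"
  assumes n_pos: "n \<ge> 1"
    and labels: "\<forall>i<n. y i \<in> {-1, 1}"
    and separable: "\<exists>wstar. \<forall>i<n. sgn (wstar \<bullet> x i) = y i"
    and l_diff: "\<forall>z. l differentiable (at z)"
    and l_decr: "antimono l"
    and l_convex: "convex_on UNIV l"
    and l_no_min: "\<forall>z. \<exists>z'. l z' < l z"
    and l_inf: "bdd_below (range l)" "(INF z. l z) = 0"
    and psi_grad: "\<forall>v. (psi has_derivative (\<lambda>h. grad_psi v \<bullet> h)) (at v)"
    and psi_strict: "strict_convex_on UNIV psi"
    and L_grad: "\<forall>v. (emp_loss n x y l has_derivative (\<lambda>h. grad_L v \<bullet> h)) (at v)"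
    and eta_pos: "eta > 0"
    and eta_small: "convex_on UNIV (\<lambda>v. psi v - eta * emp_loss n x y l v)"
    and mirror: "\<forall>t. grad_psi (w (Suc t)) = grad_psi (w t) - eta *\<^sub>R grad_L (w t)"
  shows "(\<lambda>t. emp_loss n x y l (w t)) \<longlonglongrightarrow> 0
    \<and> (\<forall>N. is_norm N \<longrightarrow> filterlim (\<lambda>t. N (w t)) at_top sequentially)"
proof -
  interpret mirror_descent "emp_loss n x y l" psi grad_L grad_psi eta w
    using convex_on_emp_loss[OF l_convex] strict_convex_on_imp_convex_on[OF convex_UNIV psi_strict]
      L_grad psi_grad eta_pos eta_small mirror
    by unfold_locales auto
  obtain ws where "\<forall>i<n. sgn (ws \<bullet> x i) = y i"
    using separable by blast
  with labels have margin: "\<And>i. i < n \<Longrightarrow> 0 < y i * (ws \<bullet> x i)"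
    by (fastforce simp: sgn_if split: if_splits)
  have loss_to_0: "(\<lambda>t. emp_loss n x y l (w t)) \<longlonglongrightarrow> 0"
    using loss_tendsto_INF INF_emp_loss_separable[OF n_pos l_decr l_inf(1) margin] l_inf(2)
    by simp
  have l_pos: "0 < l z" for z
    using l_no_min cINF_lower[OF l_inf(1)] l_inf(2) by (metis UNIV_I le_less_trans)
  have "filterlim (\<lambda>t. norm (w t)) at_top sequentially"
    using emp_loss_tendsto_0_imp_norm_at_top[of 0 n y l x w] n_pos labels l_decr l_pos loss_to_0
    by auto
  then show ?thesis
    using loss_to_0 filterlim_is_norm_at_top by blast
qed

end
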